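(* Let $X$ be a semigroup. Every idempotent $e\in I\!Z(X)$ is viable.
   Context: $Z(X)=\{z\in X:\forall x\in X\ (xz=zx)\}$, $I\!Z(X)=\{z\in Z(X):zX\subseteq Z(X)\}$. For an idempotent $e$, $H_e$ is the maximal subgroup of $X$ containing $e$; $e$ is viable if $X\setminus\{x\in X: xe=ex\in H_e\}$ is an ideal in $X$ (a set $I$ with $IX\cup XI\subseteq I$). *)

theory Defs
  imports Main
begin

text \<open>The ambient semigroup X is the whole type 'a (class semigroup_mult).\<close>

definition center :: "'a::semigroup_mult set" where
  "center = {z. \<forall>x. x * z = z * x}"

definition ideal_center :: "'a::semigroup_mult set" where
  "ideal_center = {z \<in> center. (\<forall>x. z * x \<in> center)}"

definition idempotent :: "'a::semigroup_mult \<Rightarrow> bool" where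
  "idempotent e \<longleftrightarrow> e * e = e"

definition subgroup_with_id :: "'a::semigroup_mult set \<Rightarrow> 'a \<Rightarrow> bool" where
  "subgroup_with_id G e \<longleftrightarrow> e \<in> G \<and> (\<forall>x\<in>G. \<forall>y\<in>G. x * y \<in> G)
     \<and> (\<forall>x\<in>G. e * x = x \<and> x * e = x \<and> (\<exists>y\<in>G. x * y = e \<and> y * x = e))"

definition max_subgroup :: "'a::semigroup_mult \<Rightarrow> 'a set" where
  "max_subgroup e = \<Union>{G. subgroup_with_id G e}"

definition is_ideal :: "'a::semigroup_mult set \<Rightarrow> bool" where
  "is_ideal I \<longleftrightarrow> (\<forall>i\<in>I. \<forall>x. i * x \<in> I \<and> x * i \<in> I)"

definition viable :: "'a::semigroup_mult \<Rightarrow> bool" where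
  "viable e \<longleftrightarrow> is_ideal (UNIV - {x. x * e = e * x \<and> x * e \<in> max_subgroup e})"

end

theory Submission
  imports Defs
begin

text \<open>Since e is idempotent and ideal-central, eX is a commutative monoid with identity e,
  and x \<mapsto> x e is a homomorphism from X onto eX. The complement of the set in the definition of
  viability is the preimage of the group of units of eX, which is H_e; it is an ideal because
  in a commutative monoid every factor of a unit is a unit.\<close>

definition local_units :: "'a::semigroup_mult \<Rightarrow> 'a set" where
  "local_units e = {z. e * z = z \<and> z * e = z \<and> (\<exists>w. z * w = e \<and> w * z = e)}"

lemma center_commute: "z \<in> center \<Longrightarrow> x * z = z * x"
  unfolding center_def by blast

lemma subgroup_with_id_subset_local_units:
  assumes "subgroup_with_id G e"
  shows "G \<subseteq> local_units e"
  using assms unfolding subgroup_with_id_def local_units_def by blast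

lemma local_units_mult_closed:
  assumes "x \<in> local_units e" "y \<in> local_units e"
  shows "x * y \<in> local_units e"
proof -
  obtain u where x: "e * x = x" "x * e = x" and u: "x * u = e" "u * x = e"
    using assms(1) unfolding local_units_def by blast
  obtain v where y: "e * y = y" "y * e = y" and v: "y * v = e" "v * y = e"
    using assms(2) unfolding local_units_def by blast
  have "x * y * (v * u) = x * (y * v) * u" "v * u * (x * y) = v * (u * x) * y"
    by (simp_all only: mult.assoc)
  then have "x * y * (v * u) = e" "v * u * (x * y) = e"
    using x y u v by (simp_all add: mult.assoc)
  moreover have "e * (x * y) = x * y"
    using x by (simp add: mult.assoc[symmetric])
  moreover have "x * y * e = x * y"
    using y by (simp add: mult.assoc)
  ultimately show ?thesis
    unfolding local_units_def by blast
qed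

text \<open>The inverse w of a local unit need not lie in eXe; e w e does.\<close>

lemma local_units_inverse:
  assumes "idempotent e" "x \<in> local_units e"
  shows "\<exists>y\<in>local_units e. x * y = e \<and> y * x = e"
proof -
  have ee: "e * e = e"
    using assms(1) unfolding idempotent_def .
  obtain u where x: "e * x = x" "x * e = x" and u: "x * u = e" "u * x = e"
    using assms(2) unfolding local_units_def by blast
  have "x * (e * u * e) = (x * e) * u * e" "e * u * e * x = e * (u * (e * x))"
    by (simp_all only: mult.assoc)
  then have inv: "x * (e * u * e) = e" "e * u * e * x = e"
    using x u ee by simp_all
  have "e * (e * u * e) = e * u * e"
    using ee by (simp add: mult.assoc[symmetric])
  moreover have "e * u * e * e = e * u * e"
    using ee by (simp add: mult.assoc)
  ultimately have "e * u * e \<in> local_units e"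
    using inv unfolding local_units_def by blast
  with inv show ?thesis by blast
qed

lemma subgroup_with_id_local_units:
  assumes "idempotent e"
  shows "subgroup_with_id (local_units e) e"
proof -
  have "e \<in> local_units e"
    using assms unfolding idempotent_def local_units_def by blast
  moreover have "\<forall>x\<in>local_units e. e * x = x \<and> x * e = x"
    unfolding local_units_def by blast
  ultimately show ?thesis
    unfolding subgroup_with_id_def
    using local_units_mult_closed local_units_inverse[OF assms] by blast
qed

lemma max_subgroup_eq_local_units:
  assumes "idempotent e"
  shows "max_subgroup e = local_units e"
  using subgroup_with_id_subset_local_units subgroup_with_id_local_units[OF assms]
  unfolding max_subgroup_def by blast

lemma central_factor_in_local_units:
  assumes "a \<in> center" "e * a = a" "a * e = a" "a * b \<in> local_units e"
  shows "a \<in> local_units e"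
proof -
  obtain w where w: "a * b * w = e"
    using assms(4) unfolding local_units_def by blast
  then have "a * (b * w) = e" "b * w * a = e"
    using center_commute[OF assms(1), of "b * w"] by (simp_all add: mult.assoc)
  then show ?thesis
    using assms(2,3) unfolding local_units_def by blast
qed

lemma ideal_center_mult_in_center:
  assumes "e \<in> ideal_center"
  shows "x * e \<in> center"
proof -
  have "e \<in> center" "e * x \<in> center"
    using assms unfolding ideal_center_def by auto
  then show ?thesis
    using center_commute[of e x] by simp
qed

lemma center_idempotent_mult_distrib:
  assumes "idempotent e" "e \<in> center"
  shows "x * y * e = (x * e) * (y * e)"
proof -
  have "x * y * e = x * ((y * e) * e)"
    using assms(1) unfolding idempotent_def by (simp add: mult.assoc)
  also have "\<dots> = x * (e * (y * e))"
    using center_commute[OF assms(2), of "y * e"] by simp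
  also have "\<dots> = (x * e) * (y * e)"
    by (simp only: mult.assoc)
  finally show ?thesis .
qed

lemma local_units_left_factor:
  assumes "idempotent e" "e \<in> ideal_center" "x * y * e \<in> local_units e"
  shows "x * e \<in> local_units e"
proof (rule central_factor_in_local_units)
  have ee: "e * e = e" and central: "e \<in> center"
    using assms(1,2) unfolding idempotent_def ideal_center_def by auto
  show "x * e \<in> center"
    using assms(2) by (rule ideal_center_mult_in_center)
  show "x * e * e = x * e"
    using ee by (simp add: mult.assoc)
  then show "e * (x * e) = x * e"
    using center_commute[OF central, of "x * e"] by simp
  show "x * e * (y * e) \<in> local_units e"
    using assms(3) center_idempotent_mult_distrib[OF assms(1) central] by simp
qed

theorem lemma2p5:
  fixes e :: "'a::semigroup_mult"
  assumes "idempotent e" and "e \<in> ideal_center"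
  shows "viable e"
proof -
  have central: "e \<in> center"
    using assms(2) unfolding ideal_center_def by blast
  have swap: "y * x * e = x * y * e" for x y
  proof -
    have "y * x * e = (y * e) * (x * e)"
      by (rule center_idempotent_mult_distrib[OF assms(1) central])
    also have "\<dots> = (x * e) * (y * e)"
      by (rule center_commute[OF ideal_center_mult_in_center[OF assms(2)]])
    also have "\<dots> = x * y * e"
      by (rule center_idempotent_mult_distrib[OF assms(1) central, symmetric])
    finally show ?thesis .
  qed
  have "UNIV - {x. x * e = e * x \<and> x * e \<in> max_subgroup e} = {x. x * e \<notin> local_units e}"
    using center_commute[OF central] unfolding max_subgroup_eq_local_units[OF assms(1)] by blast
  moreover have "is_ideal {x. x * e \<notin> local_units e}"
    unfolding is_ideal_def
  proof (intro ballI allI conjI)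
    fix i x assume "i \<in> {x. x * e \<notin> local_units e}"
    then have "i * x * e \<notin> local_units e"
      using local_units_left_factor[OF assms, of i x] by blast
    then show "i * x \<in> {x. x * e \<notin> local_units e}" "x * i \<in> {x. x * e \<notin> local_units e}"
      using swap[of i x] by simp_all
  qed
  ultimately show ?thesis
    unfolding viable_def by simp
qed

end
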